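(* Let $A$ be a commutative $\mathbb F_p$-algebra ($p$ a prime), let $B=A[z_1,\ldots,z_n]$ be the polynomial ring in $n$ variables over $A$, and let $a_1,\ldots,a_n\in A$ be a regular sequence in $A$. Let $\mathcal D:B^n\to B$ be the $A$-linear map $\mathcal D(h_1,\ldots,h_n)=\sum_{i=1}^n(\partial_{z_i}h_i-a_ih_i)$. Then the image $\mathrm{Im}\,\mathcal D$ is a Mathieu subspace of $B$ (viewing $B$ as an $\mathbb F_p$-algebra).
   Context: Let $k$ be a field and $R$ a commutative $k$-algebra. A $k$-vector subspace $\mathcal M\subseteq R$ is called a Mathieu subspace of $R$ if for every $f\in R$ the following holds: if $f^m\in\mathcal M$ for all $m\ge 1$, then for every $g\in R$ one has $f^mg\in\mathcal M$ for all sufficiently large $m$. $\partial_{z_i}$ denotes the formal partial derivative with respect to $z_i$ on $B$ (which is $A$-linear). *)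

theory Defs
  imports "HOL-Library.Poly_Mapping" "HOL-Computational_Algebra.Primes"
begin

text \<open>Polynomials over 'a in the variables z_0, z_1, ... (indexed by nat):
  a polynomial maps exponent vectors (nat =>0 nat) to coefficients.\<close>
type_synonym 'a mpoly = "(nat \<Rightarrow>\<^sub>0 nat) \<Rightarrow>\<^sub>0 'a"

definition poly_ring :: "nat \<Rightarrow> 'a::comm_ring_1 mpoly set" where
  "poly_ring n = {f. \<forall>m\<in>Poly_Mapping.keys f. Poly_Mapping.keys m \<subseteq> {..<n}}"

definition const_poly :: "'a::comm_ring_1 \<Rightarrow> 'a mpoly" where
  "const_poly c = Poly_Mapping.single 0 c"

definition pdiff :: "nat \<Rightarrow> 'a::comm_ring_1 mpoly \<Rightarrow> 'a mpoly" where
  "pdiff i f = (\<Sum>m\<in>Poly_Mapping.keys f.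
      Poly_Mapping.single (m - Poly_Mapping.single i 1)
        (of_nat (Poly_Mapping.lookup m i) * Poly_Mapping.lookup f m))"

definition gen_ideal :: "(nat \<Rightarrow> 'a::comm_ring_1) \<Rightarrow> nat \<Rightarrow> 'a set" where
  "gen_ideal a k = {x. \<exists>r. x = (\<Sum>j<k. r j * a j)}"

definition regular_sequence :: "nat \<Rightarrow> (nat \<Rightarrow> 'a::comm_ring_1) \<Rightarrow> bool" where
  "regular_sequence n a \<longleftrightarrow>
     (\<forall>i<n. \<forall>x. x * a i \<in> gen_ideal a i \<longrightarrow> x \<in> gen_ideal a i) \<and>
     (1::'a) \<notin> gen_ideal a n"

text \<open>Mathieu subspace M of the commutative F_p-algebra R (given as a carrier set):
  M is an F_p-subspace (= additive subgroup) of R, and whenever f in R has all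
  powers f^m (m >= 1) in M, then for every g in R, f^m g is in M for all large m.\<close>
definition mathieu_subspace :: "'r::comm_ring_1 set \<Rightarrow> 'r set \<Rightarrow> bool" where
  "mathieu_subspace R M \<longleftrightarrow>
     M \<subseteq> R \<and> 0 \<in> M \<and> (\<forall>x\<in>M. \<forall>y\<in>M. x + y \<in> M) \<and> (\<forall>x\<in>M. - x \<in> M) \<and>
     (\<forall>f\<in>R. (\<forall>m\<ge>1. f ^ m \<in> M) \<longrightarrow>
        (\<forall>g\<in>R. \<exists>N. \<forall>m\<ge>N. f ^ m * g \<in> M))"

definition image_D :: "nat \<Rightarrow> (nat \<Rightarrow> 'a::comm_ring_1) \<Rightarrow> 'a mpoly set" where
  "image_D n a = {(\<Sum>i<n. pdiff i (h i) - const_poly (a i) * h i) | h.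
                    \<forall>i<n. h i \<in> poly_ring n}"

end

theory Submission
  imports Defs "HOL.Modules"
begin

text \<open>
  Let \<open>M = Im \<D>\<close> with \<open>\<D>(h) = \<Sum>i<n. (\<partial>\<^sub>i h\<^sub>i - a\<^sub>i h\<^sub>i)\<close> on \<open>B = A[z\<^sub>0, \<dots>, z\<^sub>n\<^sub>-\<^sub>1]\<close>.
  \<open>M\<close> is an \<open>A\<close>-submodule, and since \<open>a\<^sub>i g \<equiv> \<partial>\<^sub>i g\<close> modulo \<open>M\<close> and \<open>\<partial>\<^sub>i ^ p = 0\<close> in
  characteristic \<open>p\<close>, we get \<open>a\<^sub>i ^ p g \<in> M\<close> for every \<open>g \<in> B\<close>.

  Now let \<open>f ^ m \<in> M\<close> for all \<open>m \<ge> 1\<close> and put \<open>c = f ^ p\<close>.  By the Frobenius identity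
  all exponents of \<open>c\<close> are divisible by \<open>p\<close>.  Certain additive truncation operators
  \<open>\<phi>\<^sub>j\<close> (composed to \<open>\<Phi>\<close>) kill \<open>Im \<D>\<close> modulo \<open>(a\<^sub>0 ^ p, \<dots>, a\<^sub>n\<^sub>-\<^sub>1 ^ p)\<close> and act on \<open>c\<close> as
  multiplication by \<open>\<Prod>i. a\<^sub>i ^ (p - 1)\<close>; regularity of the sequence \<open>a\<close> then forces
  every coefficient of \<open>c\<close> into \<open>(a\<^sub>0, \<dots>, a\<^sub>n\<^sub>-\<^sub>1)\<close>.  So \<open>c = \<Sum>j. a\<^sub>j c\<^sub>j\<close>, each
  \<open>(a\<^sub>j c\<^sub>j) ^ p\<close> multiplies \<open>B\<close> into \<open>M\<close>, and by the binomial theorem so does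
  \<open>c ^ (n (p - 1) + 1)\<close>; hence \<open>f ^ m g \<in> M\<close> for all \<open>m \<ge> p (n (p - 1) + 1)\<close>.
\<close>

section \<open>General commutative algebra\<close>

text \<open>In a commutative ring in which a prime \<open>p\<close> is zero, \<open>x \<mapsto> x ^ p\<close> is additive:
  the inner binomial coefficients are divisible by \<open>p\<close>.  (The library's
  \<open>freshmans_dream\<close> assumes \<open>p = CHAR('b)\<close> instead, which excludes the zero ring.)\<close>

lemma freshmans_dream_prime:
  fixes x y :: "'b::comm_ring_1"
  assumes p: "prime p" and char: "of_nat p = (0::'b)"
  shows "(x + y) ^ p = x ^ p + y ^ p"
proof -
  have p0: "p \<noteq> 0" using p by auto
  let ?term = "\<lambda>k. of_nat (p choose k) * x ^ k * y ^ (p - k)"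
  have "(x + y) ^ p = (\<Sum>k\<le>p. ?term k)" by (simp add: binomial_ring)
  also have "\<dots> = (\<Sum>k\<in>{0, p}. ?term k)"
  proof (rule sum.mono_neutral_right)
    show "\<forall>k\<in>{..p} - {0, p}. ?term k = 0"
    proof
      fix k assume "k \<in> {..p} - {0, p}"
      then have "p dvd (p choose k)" using dvd_choose_prime[of k p] p p0 by auto
      then obtain q where "p choose k = p * q" by blast
      then show "?term k = 0" using char by simp
    qed
  qed auto
  also have "\<dots> = x ^ p + y ^ p" using p0 by simp
  finally show ?thesis .
qed

lemma freshmans_dream_prime_sum:
  fixes f :: "'c \<Rightarrow> 'b::comm_ring_1"
  assumes p: "prime p" and char: "of_nat p = (0::'b)"
  shows "(sum f S) ^ p = (\<Sum>i\<in>S. f i ^ p)"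
proof (induction S rule: infinite_finite_induct)
  case (insert x F)
  then show ?case by (simp add: freshmans_dream_prime[OF p char])
qed (use p in \<open>auto simp: power_0_left prime_gt_0_nat\<close>)

text \<open>This property passes to sums, by the binomial theorem.\<close>

definition absorbed :: "'b::comm_ring_1 set \<Rightarrow> 'b set \<Rightarrow> nat \<Rightarrow> 'b \<Rightarrow> bool" where
  "absorbed B M k x \<longleftrightarrow> (\<forall>g\<in>B. x ^ k * g \<in> M)"

lemma power_closed: "(\<forall>x\<in>B. \<forall>y\<in>B. x * y \<in> B) \<Longrightarrow> 1 \<in> B \<Longrightarrow> x \<in> B \<Longrightarrow> x ^ k \<in> B"
  by (induction k) auto

lemma submonoid_sum: "0 \<in> M \<Longrightarrow> (\<forall>x\<in>M. \<forall>y\<in>M. x + y \<in> M) \<Longrightarrow> (\<And>i. i \<in> S \<Longrightarrow> f i \<in> M) \<Longrightarrow> sum f S \<in> M"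
  by (induction S rule: infinite_finite_induct) auto

lemma submonoid_of_nat_mult: "0 \<in> M \<Longrightarrow> (\<forall>x\<in>M. \<forall>y\<in>M. x + y \<in> M) \<Longrightarrow> w \<in> M \<Longrightarrow> (of_nat k :: 'b::comm_ring_1) * w \<in> M"
  by (induction k) (auto simp: distrib_right)

text \<open>In \<open>(x + y) ^ (a + b - 1)\<close> every monomial \<open>x ^ k * y ^ (a + b - 1 - k)\<close> has
  \<open>k \<ge> a\<close> or \<open>a + b - 1 - k \<ge> b\<close>.\<close>

lemma absorbed_add:
  fixes B M :: "'b::comm_ring_1 set"
  assumes B_mult: "\<forall>x\<in>B. \<forall>y\<in>B. x * y \<in> B" and B_one: "1 \<in> B" and M_zero: "0 \<in> M"
    and M_add: "\<forall>x\<in>M. \<forall>y\<in>M. x + y \<in> M"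
    and x: "x \<in> B" and y: "y \<in> B" and abs_x: "absorbed B M a x" and abs_y: "absorbed B M b y"
    and a: "a \<ge> 1" and b: "b \<ge> 1"
  shows "absorbed B M (a + b - 1) (x + y)"
  unfolding absorbed_def
proof
  fix g assume g: "g \<in> B"
  let ?N = "a + b - 1"
  have monomial: "x ^ k * y ^ (?N - k) * g \<in> M" if k: "k \<le> ?N" for k
  proof (cases "a \<le> k")
    case True
    then have "x ^ k = x ^ a * x ^ (k - a)" by (simp flip: power_add)
    then have "x ^ k * y ^ (?N - k) * g = x ^ a * (x ^ (k - a) * y ^ (?N - k) * g)"
      by (simp add: algebra_simps)
    moreover have "x ^ (k - a) * y ^ (?N - k) * g \<in> B"
      using B_mult power_closed[OF B_mult B_one x] power_closed[OF B_mult B_one y] g by auto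
    ultimately show ?thesis using abs_x unfolding absorbed_def by simp
  next
    case False
    then have "?N - k = b + (?N - k - b)" using a b k by auto
    then have "y ^ (?N - k) = y ^ b * y ^ (?N - k - b)" by (metis power_add)
    then have "x ^ k * y ^ (?N - k) * g = y ^ b * (x ^ k * y ^ (?N - k - b) * g)"
      by (simp add: algebra_simps)
    moreover have "x ^ k * y ^ (?N - k - b) * g \<in> B"
      using B_mult power_closed[OF B_mult B_one x] power_closed[OF B_mult B_one y] g by auto
    ultimately show ?thesis using abs_y unfolding absorbed_def by simp
  qed
  have "(x + y) ^ ?N * g = (\<Sum>k\<le>?N. of_nat (?N choose k) * (x ^ k * y ^ (?N - k) * g))"
    by (simp add: binomial_ring sum_distrib_right mult.assoc)
  also have "\<dots> \<in> M"
    by (intro submonoid_sum[OF M_zero M_add] submonoid_of_nat_mult[OF M_zero M_add] monomial) simp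
  finally show "(x + y) ^ ?N * g \<in> M" .
qed

lemma absorbed_sum:
  fixes B M :: "'b::comm_ring_1 set"
  assumes B_mult: "\<forall>x\<in>B. \<forall>y\<in>B. x * y \<in> B" and B_add: "\<forall>x\<in>B. \<forall>y\<in>B. x + y \<in> B"
    and B_zero: "0 \<in> B" and B_one: "1 \<in> B"
    and M_zero: "0 \<in> M" and M_add: "\<forall>x\<in>M. \<forall>y\<in>M. x + y \<in> M" and q: "q \<ge> 1"
    and u: "\<And>j. j < k \<Longrightarrow> u j \<in> B \<and> absorbed B M q (u j)"
  shows "absorbed B M (k * (q - 1) + 1) (\<Sum>j<k. u j)"
  using u
proof (induction k)
  case 0
  then show ?case using M_zero by (simp add: absorbed_def)
next
  case (Suc k)
  have partial_sum: "(\<Sum>j<k. u j) \<in> B"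
    using Suc.prems by (intro submonoid_sum[OF B_zero B_add]) auto
  have IH: "absorbed B M (k * (q - 1) + 1) (\<Sum>j<k. u j)" using Suc by simp
  have last: "u k \<in> B" "absorbed B M q (u k)" using Suc.prems by auto
  have "absorbed B M ((k * (q - 1) + 1) + q - 1) ((\<Sum>j<k. u j) + u k)"
    by (rule absorbed_add[OF B_mult B_one M_zero M_add partial_sum last(1) IH last(2) _ q]) simp
  moreover have "(k * (q - 1) + 1) + q - 1 = Suc k * (q - 1) + 1" using q by simp
  ultimately show ?case by (simp add: add.commute)
qed

text \<open>Ideals of a commutative ring are handled as sets; \<open>adjoin K z\<close> is \<open>K + (z)\<close> and
  \<open>adjoin_seq L y k\<close> is \<open>L + (y 0, \<dots>, y (k - 1))\<close>.\<close>

definition is_ideal :: "'a::comm_ring_1 set \<Rightarrow> bool" where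
  "is_ideal L \<longleftrightarrow> 0 \<in> L \<and> (\<forall>x\<in>L. \<forall>y\<in>L. x + y \<in> L) \<and> (\<forall>x\<in>L. \<forall>r. r * x \<in> L)"

definition adjoin :: "'a::comm_ring_1 set \<Rightarrow> 'a \<Rightarrow> 'a set" where
  "adjoin K z = {x. \<exists>s. x - s * z \<in> K}"

definition adjoin_seq :: "'a::comm_ring_1 set \<Rightarrow> (nat \<Rightarrow> 'a) \<Rightarrow> nat \<Rightarrow> 'a set" where
  "adjoin_seq L y k = {x. \<exists>r. x - (\<Sum>i<k. r i * y i) \<in> L}"

text \<open>\<open>b\<close> is a nonzerodivisor modulo \<open>K\<close>, and \<open>y 0, \<dots>, y (m - 1)\<close> is a regular
  sequence modulo \<open>L\<close> (without the properness condition).\<close>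

definition nzd_mod :: "'a::comm_ring_1 set \<Rightarrow> 'a \<Rightarrow> bool" where
  "nzd_mod K b \<longleftrightarrow> (\<forall>u. b * u \<in> K \<longrightarrow> u \<in> K)"

definition regular_mod :: "'a::comm_ring_1 set \<Rightarrow> (nat \<Rightarrow> 'a) \<Rightarrow> nat \<Rightarrow> bool" where
  "regular_mod L y m \<longleftrightarrow> (\<forall>j<m. nzd_mod (adjoin_seq L y j) (y j))"

lemma ideal_zero: "is_ideal L \<Longrightarrow> 0 \<in> L"
  by (simp add: is_ideal_def)

lemma ideal_add: "is_ideal L \<Longrightarrow> x \<in> L \<Longrightarrow> y \<in> L \<Longrightarrow> x + y \<in> L"
  by (simp add: is_ideal_def)

lemma ideal_mult_left: "is_ideal L \<Longrightarrow> x \<in> L \<Longrightarrow> r * x \<in> L"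
  by (simp add: is_ideal_def)

lemma ideal_mult_right: "is_ideal L \<Longrightarrow> x \<in> L \<Longrightarrow> x * r \<in> L"
  using ideal_mult_left[of L x r] by (simp add: mult.commute)

lemma ideal_uminus: "is_ideal L \<Longrightarrow> x \<in> L \<Longrightarrow> - x \<in> L"
  using ideal_mult_left[of L x "-1"] by simp

lemma ideal_diff: "is_ideal L \<Longrightarrow> x \<in> L \<Longrightarrow> y \<in> L \<Longrightarrow> x - y \<in> L"
  using ideal_add[of L x "- y"] ideal_uminus[of L y] by simp

lemma ideal_sum: "is_ideal L \<Longrightarrow> (\<And>i. i \<in> S \<Longrightarrow> f i \<in> L) \<Longrightarrow> sum f S \<in> L"
  by (induction S rule: infinite_finite_induct) (auto simp: ideal_zero ideal_add)

lemma is_ideal_zero: "is_ideal {0::'a::comm_ring_1}"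
  by (simp add: is_ideal_def)

lemma adjoin_iff: "x \<in> adjoin K z \<longleftrightarrow> (\<exists>s. x - s * z \<in> K)"
  by (simp add: adjoin_def)

lemma adjoin_seq_iff: "x \<in> adjoin_seq L y k \<longleftrightarrow> (\<exists>r. x - (\<Sum>i<k. r i * y i) \<in> L)"
  by (simp add: adjoin_seq_def)

lemma adjoin_ideal:
  assumes K: "is_ideal K"
  shows "is_ideal (adjoin K z)"
  unfolding is_ideal_def adjoin_def
proof (intro conjI ballI allI; clarsimp)
  show "\<exists>s. - (s * z) \<in> K" using ideal_zero[OF K] by (intro exI[of _ 0]) simp
next
  fix x y s t assume "x - s * z \<in> K" "y - t * z \<in> K"
  then have "(x - s * z) + (y - t * z) \<in> K" by (simp add: ideal_add K)
  then show "\<exists>u. x + y - u * z \<in> K" by (intro exI[of _ "s + t"]) (simp add: algebra_simps)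
next
  fix x r s assume "x - s * z \<in> K"
  then have "r * (x - s * z) \<in> K" by (simp add: ideal_mult_left K)
  then show "\<exists>u. r * x - u * z \<in> K" by (intro exI[of _ "r * s"]) (simp add: algebra_simps)
qed

lemma adjoin_seq_ideal:
  assumes L: "is_ideal L"
  shows "is_ideal (adjoin_seq L y k)"
  unfolding is_ideal_def adjoin_seq_def
proof (intro conjI ballI allI; clarsimp)
  show "\<exists>r. - (\<Sum>i<k. r i * y i) \<in> L" using ideal_zero[OF L] by (intro exI[of _ "\<lambda>_. 0"]) simp
next
  fix x x' r s assume "x - (\<Sum>i<k. r i * y i) \<in> L" "x' - (\<Sum>i<k. s i * y i) \<in> L"
  then have "(x - (\<Sum>i<k. r i * y i)) + (x' - (\<Sum>i<k. s i * y i)) \<in> L" by (simp add: ideal_add L)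
  then show "\<exists>u. x + x' - (\<Sum>i<k. u i * y i) \<in> L"
    by (intro exI[of _ "\<lambda>i. r i + s i"]) (simp add: algebra_simps sum.distrib)
next
  fix x t r assume "x - (\<Sum>i<k. r i * y i) \<in> L"
  then have "t * (x - (\<Sum>i<k. r i * y i)) \<in> L" by (simp add: ideal_mult_left L)
  then show "\<exists>u. t * x - (\<Sum>i<k. u i * y i) \<in> L"
    by (intro exI[of _ "\<lambda>i. t * r i"]) (simp add: algebra_simps sum_distrib_left)
qed

lemma adjoin_seq_0: "is_ideal L \<Longrightarrow> adjoin_seq L y 0 = L"
  unfolding adjoin_seq_def by auto

lemma adjoin_seq_generator: "is_ideal L \<Longrightarrow> j < k \<Longrightarrow> r * y j \<in> adjoin_seq L y k"
proof -
  assume L: "is_ideal L" and j: "j < k"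
  have "(\<Sum>i<k. (if i = j then r else 0) * y i) = (\<Sum>i<k. if i = j then r * y i else 0)"
    by (rule sum.cong) auto
  also have "\<dots> = r * y j" using j by (simp add: sum.delta)
  finally have "(\<Sum>i<k. (if i = j then r else 0) * y i) = r * y j" .
  then show ?thesis unfolding adjoin_seq_iff using ideal_zero[OF L] by (metis diff_self)
qed

lemma adjoin_seq_mono: "k \<le> m \<Longrightarrow> adjoin_seq L y k \<subseteq> adjoin_seq L y m"
proof
  fix x assume "k \<le> m" "x \<in> adjoin_seq L y k"
  then obtain r where r: "x - (\<Sum>i<k. r i * y i) \<in> L" unfolding adjoin_seq_iff by blast
  have "(\<Sum>i<m. (if i < k then r i else 0) * y i) = (\<Sum>i<k. r i * y i)"
    using \<open>k \<le> m\<close> by (intro sum.mono_neutral_cong_right) auto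
  then show "x \<in> adjoin_seq L y m" unfolding adjoin_seq_iff using r by metis
qed

lemma adjoin_seq_adjoin: "adjoin_seq (adjoin L z) w m = adjoin (adjoin_seq L w m) z"
  unfolding adjoin_seq_def adjoin_def by (auto simp: algebra_simps)

lemma adjoin_seq_Suc: "adjoin_seq L y (Suc m) = adjoin (adjoin_seq L y m) (y m)"
proof (rule set_eqI, unfold adjoin_seq_iff adjoin_iff, rule iffI)
  fix x assume "\<exists>r. x - (\<Sum>i<Suc m. r i * y i) \<in> L"
  then obtain r where "x - (\<Sum>i<Suc m. r i * y i) \<in> L" by blast
  then have "x - r m * y m - (\<Sum>i<m. r i * y i) \<in> L" by (simp add: algebra_simps)
  then show "\<exists>s r. x - s * y m - (\<Sum>i<m. r i * y i) \<in> L" by blast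
next
  fix x assume "\<exists>s r. x - s * y m - (\<Sum>i<m. r i * y i) \<in> L"
  then obtain s r where h: "x - s * y m - (\<Sum>i<m. r i * y i) \<in> L" by blast
  have "(\<Sum>i<m. (r(m := s)) i * y i) = (\<Sum>i<m. r i * y i)" by (rule sum.cong) auto
  then have "x - (\<Sum>i<Suc m. (r(m := s)) i * y i) \<in> L" using h by (simp add: algebra_simps)
  then show "\<exists>r. x - (\<Sum>i<Suc m. r i * y i) \<in> L" by blast
qed

lemma adjoin_seq_Suc_first: "adjoin_seq L y (Suc m) = adjoin_seq (adjoin L (y 0)) (y \<circ> Suc) m"
proof (rule set_eqI, unfold adjoin_seq_iff adjoin_iff, rule iffI)
  fix x assume "\<exists>r. x - (\<Sum>i<Suc m. r i * y i) \<in> L"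
  then obtain r where "x - (\<Sum>i<Suc m. r i * y i) \<in> L" by blast
  then have "x - (\<Sum>i<m. (r \<circ> Suc) i * (y \<circ> Suc) i) - r 0 * y 0 \<in> L"
    unfolding sum.lessThan_Suc_shift by (simp add: algebra_simps)
  then show "\<exists>r s. x - (\<Sum>i<m. r i * (y \<circ> Suc) i) - s * y 0 \<in> L" by blast
next
  fix x assume "\<exists>r s. x - (\<Sum>i<m. r i * (y \<circ> Suc) i) - s * y 0 \<in> L"
  then obtain r s where h: "x - (\<Sum>i<m. r i * (y \<circ> Suc) i) - s * y 0 \<in> L" by blast
  let ?r = "\<lambda>i. case i of 0 \<Rightarrow> s | Suc j \<Rightarrow> r j"
  have "x - (\<Sum>i<Suc m. ?r i * y i) \<in> L" using h
    unfolding sum.lessThan_Suc_shift by (simp add: algebra_simps)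
  then show "\<exists>r. x - (\<Sum>i<Suc m. r i * y i) \<in> L" by blast
qed

lemma adjoin_seq_Suc_adjoin_first: "adjoin_seq L y (Suc m) = adjoin (adjoin_seq L (y \<circ> Suc) m) (y 0)"
  by (simp add: adjoin_seq_Suc_first adjoin_seq_adjoin)

lemma regular_mod_mono: "regular_mod L y m \<Longrightarrow> k \<le> m \<Longrightarrow> regular_mod L y k"
  unfolding regular_mod_def by auto

lemma nzd_mod_first:
  assumes L: "is_ideal L" and reg: "regular_mod L y (Suc m)"
  shows "nzd_mod (adjoin_seq L (y \<circ> Suc) m) (y 0)"
  using reg
proof (induction m)
  case 0
  then show ?case using L by (auto simp: regular_mod_def adjoin_seq_0)
next
  case (Suc m)
  let ?K = "adjoin_seq L (y \<circ> Suc) m"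
  have K: "is_ideal ?K" using L adjoin_seq_ideal by blast
  have IH: "nzd_mod ?K (y 0)" using Suc regular_mod_mono by (metis le_SucI order_refl)
  have last: "nzd_mod (adjoin_seq L y (Suc m)) (y (Suc m))"
    using Suc.prems unfolding regular_mod_def by auto
  show ?case unfolding nzd_mod_def
  proof (intro allI impI)
    fix X assume "y 0 * X \<in> adjoin_seq L (y \<circ> Suc) (Suc m)"
    then obtain t where t: "y 0 * X - t * y (Suc m) \<in> ?K"
      unfolding adjoin_seq_Suc adjoin_def by auto
    have "y (Suc m) * t - X * y 0 = - (y 0 * X - t * y (Suc m))" by (simp add: algebra_simps)
    then have "y (Suc m) * t - X * y 0 \<in> ?K" using ideal_uminus[OF K t] by metis
    then have "y (Suc m) * t \<in> adjoin ?K (y 0)" unfolding adjoin_iff by blast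
    then have "t \<in> adjoin ?K (y 0)" using last unfolding nzd_mod_def adjoin_seq_Suc_adjoin_first by blast
    then obtain s where s: "t - s * y 0 \<in> ?K" unfolding adjoin_def by auto
    have "y 0 * X - t * y (Suc m) + (t - s * y 0) * y (Suc m) \<in> ?K"
      by (rule ideal_add[OF K t ideal_mult_right[OF K s]])
    then have "y 0 * (X - s * y (Suc m)) \<in> ?K" by (simp add: algebra_simps)
    then have "X - s * y (Suc m) \<in> ?K" using IH unfolding nzd_mod_def by blast
    then show "X \<in> adjoin_seq L (y \<circ> Suc) (Suc m)"
      unfolding adjoin_seq_Suc adjoin_def by auto
  qed
qed

lemma nzd_mod_power:
  assumes "nzd_mod K b"
  shows "nzd_mod K (b ^ e)"
proof (induction e)
  case 0
  show ?case by (simp add: nzd_mod_def)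
next
  case (Suc e)
  show ?case unfolding nzd_mod_def
  proof (intro allI impI)
    fix u assume "b ^ Suc e * u \<in> K"
    then have "b * (b ^ e * u) \<in> K" by (simp add: mult.assoc)
    then have "b ^ e * u \<in> K" using assms unfolding nzd_mod_def by blast
    then show "u \<in> K" using Suc unfolding nzd_mod_def by blast
  qed
qed

lemma nzd_mod_adjoin_power:
  assumes K: "is_ideal K" and z: "nzd_mod K z" and b: "nzd_mod (adjoin K z) b"
  shows "nzd_mod (adjoin K (z ^ e)) b"
proof (induction e)
  case 0
  have "u \<in> adjoin K (z ^ 0)" for u
    unfolding adjoin_iff using ideal_zero[OF K] by (intro exI[of _ u]) simp
  then show ?case unfolding nzd_mod_def by blast
next
  case (Suc e)
  show ?case unfolding nzd_mod_def
  proof (intro allI impI)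
    fix u assume "b * u \<in> adjoin K (z ^ Suc e)"
    then obtain s where s: "b * u - s * z ^ Suc e \<in> K" unfolding adjoin_iff by auto
    have "b * u - (s * z ^ e) * z = b * u - s * z ^ Suc e" by (simp add: algebra_simps)
    then have "b * u \<in> adjoin K z" unfolding adjoin_iff using s by metis
    then have "u \<in> adjoin K z" using b unfolding nzd_mod_def by blast
    then obtain u1 where u1: "u - u1 * z \<in> K" unfolding adjoin_iff by auto
    have "b * u - s * z ^ Suc e - b * (u - u1 * z) \<in> K"
      by (rule ideal_diff[OF K s ideal_mult_left[OF K u1]])
    moreover have "b * u - s * z ^ Suc e - b * (u - u1 * z) = z * (b * u1 - s * z ^ e)"
      by (simp add: algebra_simps)
    ultimately have "z * (b * u1 - s * z ^ e) \<in> K" by simp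
    then have "b * u1 - s * z ^ e \<in> K" using z unfolding nzd_mod_def by blast
    then have "b * u1 \<in> adjoin K (z ^ e)" unfolding adjoin_iff by blast
    then have "u1 \<in> adjoin K (z ^ e)" using Suc unfolding nzd_mod_def by blast
    then obtain v where v: "u1 - v * z ^ e \<in> K" unfolding adjoin_iff by auto
    have "u - u1 * z + (u1 - v * z ^ e) * z \<in> K"
      by (rule ideal_add[OF K u1 ideal_mult_right[OF K v]])
    moreover have "u - u1 * z + (u1 - v * z ^ e) * z = u - v * z ^ Suc e" by (simp add: algebra_simps)
    ultimately show "u \<in> adjoin K (z ^ Suc e)" unfolding adjoin_iff by metis
  qed
qed

lemma regular_mod_tail:
  assumes L: "is_ideal L" and reg: "regular_mod L y (Suc m)"
  shows "regular_mod (adjoin L (y 0 ^ e)) (y \<circ> Suc) m"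
  unfolding regular_mod_def
proof (intro allI impI)
  fix j assume j: "j < m"
  let ?K = "adjoin_seq L (y \<circ> Suc) j"
  have K: "is_ideal ?K" using adjoin_seq_ideal L by blast
  have z: "nzd_mod ?K (y 0)" using nzd_mod_first[OF L regular_mod_mono[OF reg]] j by simp
  have b: "nzd_mod (adjoin ?K (y 0)) (y (Suc j))"
    using reg j unfolding regular_mod_def adjoin_seq_Suc_adjoin_first[symmetric] by auto
  show "nzd_mod (adjoin_seq (adjoin L (y 0 ^ e)) (y \<circ> Suc) j) ((y \<circ> Suc) j)"
    using nzd_mod_adjoin_power[OF K z b, of e] by (simp add: adjoin_seq_adjoin)
qed

lemma regular_cancel_powers:
  assumes "is_ideal L" "regular_mod L y m" "q \<ge> 1"
    and "(\<Prod>i<m. y i ^ (q - 1)) * c \<in> adjoin_seq L (\<lambda>i. y i ^ q) m"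
  shows "c \<in> adjoin_seq L y m"
  using assms
proof (induction m arbitrary: L y c)
  case 0
  then show ?case by (simp add: adjoin_seq_0)
next
  case (Suc m)
  let ?L' = "adjoin L (y 0 ^ q)"
  let ?K = "adjoin_seq L (y \<circ> Suc) m"
  have L': "is_ideal ?L'" using adjoin_ideal Suc.prems by blast
  have reg': "regular_mod ?L' (y \<circ> Suc) m" using regular_mod_tail Suc.prems by blast
  have "(\<Prod>i<Suc m. y i ^ (q - 1)) = y 0 ^ (q - 1) * (\<Prod>i<m. (y \<circ> Suc) i ^ (q - 1))"
    unfolding prod.lessThan_Suc_shift by simp
  moreover have "adjoin_seq L (\<lambda>i. y i ^ q) (Suc m) = adjoin_seq ?L' (\<lambda>i. (y \<circ> Suc) i ^ q) m"
    using adjoin_seq_Suc_first[of L "\<lambda>i. y i ^ q" m] by (simp add: comp_def)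
  ultimately have "(\<Prod>i<m. (y \<circ> Suc) i ^ (q - 1)) * (y 0 ^ (q - 1) * c)
      \<in> adjoin_seq ?L' (\<lambda>i. (y \<circ> Suc) i ^ q) m"
    using Suc.prems(4) by (simp add: algebra_simps)
  then have "y 0 ^ (q - 1) * c \<in> adjoin_seq ?L' (y \<circ> Suc) m"
    using Suc.IH[OF L' reg'] Suc.prems(3) by blast
  then obtain s where s: "y 0 ^ (q - 1) * c - s * y 0 ^ q \<in> ?K"
    unfolding adjoin_seq_adjoin adjoin_iff by blast
  have "y 0 ^ q = y 0 ^ (q - 1) * y 0" using Suc.prems(3)
    by (metis One_nat_def Suc_pred' less_eq_Suc_le power_Suc2)
  then have "y 0 ^ (q - 1) * (c - s * y 0) \<in> ?K" using s by (simp add: algebra_simps)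
  moreover have "nzd_mod ?K (y 0 ^ (q - 1))"
    using nzd_mod_power[OF nzd_mod_first[OF Suc.prems(1,2)]] .
  ultimately have "c - s * y 0 \<in> ?K" unfolding nzd_mod_def by blast
  then show ?case unfolding adjoin_seq_Suc_adjoin_first adjoin_iff by blast
qed

lemma absorbed_power_eventually:
  assumes B_mult: "\<forall>x\<in>B. \<forall>y\<in>B. x * y \<in> B" and B_one: "1 \<in> B"
    and f: "f \<in> B" and g: "g \<in> B" and absorbed: "absorbed B M K (f ^ p)"
  shows "\<forall>m\<ge>p * K. f ^ m * g \<in> M"
proof (intro allI impI)
  fix m assume m: "p * K \<le> m"
  then have "f ^ m = (f ^ p) ^ K * f ^ (m - p * K)"
    by (metis le_add_diff_inverse power_add power_mult)
  then have "f ^ m * g = (f ^ p) ^ K * (f ^ (m - p * K) * g)" by (simp add: mult.assoc)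
  moreover have "f ^ (m - p * K) * g \<in> B" using B_mult power_closed[OF B_mult B_one f] g by blast
  ultimately show "f ^ m * g \<in> M" using absorbed unfolding absorbed_def by simp
qed

section \<open>Polynomials as finitely supported coefficient maps\<close>

lemma monomial_expansion:
  "(\<Sum>k\<in>Poly_Mapping.keys f. Poly_Mapping.single k (Poly_Mapping.lookup f k)) = (f :: 'b \<Rightarrow>\<^sub>0 'c::comm_monoid_add)"
  by (rule poly_mapping_eqI) (simp add: lookup_sum lookup_single when_def in_keys_iff)

lemma additive_expansion:
  "additive F \<Longrightarrow> F f = (\<Sum>k\<in>Poly_Mapping.keys f. F (Poly_Mapping.single k (Poly_Mapping.lookup f k)))"
  using additive.sum[of F "\<lambda>k. Poly_Mapping.single k (Poly_Mapping.lookup f k)" "Poly_Mapping.keys f"]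
  by (simp add: monomial_expansion)

lemma additive_eq_on_monomials:
  "additive F \<Longrightarrow> additive G \<Longrightarrow> (\<And>k c. F (Poly_Mapping.single k c) = G (Poly_Mapping.single k c))
    \<Longrightarrow> F f = G f"
  using additive_expansion[of F f] additive_expansion[of G f] by simp

lemma additive_comp: "additive F \<Longrightarrow> additive G \<Longrightarrow> additive (F \<circ> G)"
  by (simp add: additive_def)

lemma additive_mult_left: "additive (\<lambda>x. c * (x :: 'b::comm_ring_1))"
  by (simp add: additive_def distrib_left)

lemma additive_pdiff: "additive (pdiff i)"
  unfolding additive_def pdiff_def
  by (intro allI setsum_keys_plus_distrib) (auto simp: single_add distrib_left lookup_add)

lemma pdiff_single:
  "pdiff i (Poly_Mapping.single m c) =
    Poly_Mapping.single (m - Poly_Mapping.single i 1) (of_nat (Poly_Mapping.lookup m i) * c)"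
  by (simp add: pdiff_def)

lemma const_mult_single: "const_poly a * Poly_Mapping.single m c = Poly_Mapping.single m (a * c)"
  by (simp add: const_poly_def mult_single)

lemma const_mult_const: "const_poly r * const_poly s = const_poly (r * s)"
  by (simp add: const_poly_def mult_single)

lemma lookup_const_mult: "Poly_Mapping.lookup (const_poly r * c) m = r * Poly_Mapping.lookup c m"
  unfolding const_poly_def mult_map_scale_conv_mult[symmetric]
  by (simp add: map.rep_eq when_def)

lemma keys_const_mult: "Poly_Mapping.keys (const_poly r * c) \<subseteq> Poly_Mapping.keys c"
  by (auto simp: in_keys_iff lookup_const_mult)

lemma lookup_minus_single:
  "Poly_Mapping.lookup (m - Poly_Mapping.single j t) k = Poly_Mapping.lookup m k - (if k = j then t else 0)"
  by (simp add: lookup_minus lookup_single when_def)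

lemma keys_minus_single: "Poly_Mapping.keys (m - Poly_Mapping.single i (k::nat)) \<subseteq> Poly_Mapping.keys m"
  by (auto simp: in_keys_iff lookup_minus_single)

definition coeffs_in :: "'a::comm_ring_1 set \<Rightarrow> 'a mpoly \<Rightarrow> bool" where
  "coeffs_in L c \<longleftrightarrow> (\<forall>m. Poly_Mapping.lookup c m \<in> L)"

lemma coeffs_in_sum: "is_ideal L \<Longrightarrow> (\<And>i. i \<in> S \<Longrightarrow> coeffs_in L (f i)) \<Longrightarrow> coeffs_in L (sum f S)"
  by (simp add: coeffs_in_def lookup_sum ideal_sum)

lemma coeffs_in_single: "is_ideal L \<Longrightarrow> r \<in> L \<Longrightarrow> coeffs_in L (Poly_Mapping.single m r)"
  by (simp add: coeffs_in_def lookup_single when_def ideal_zero)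

lemma coeffs_in_uminus: "is_ideal L \<Longrightarrow> coeffs_in L x \<Longrightarrow> coeffs_in L (- x)"
  by (simp add: coeffs_in_def ideal_uminus)

lemma coeffs_in_mono: "L \<subseteq> L' \<Longrightarrow> coeffs_in L y \<Longrightarrow> coeffs_in L' y"
  by (auto simp: coeffs_in_def)

text \<open>Polynomials all of whose exponents are divisible by \<open>p\<close>; in characteristic \<open>p\<close>
  these include all \<open>p\<close>-th powers.\<close>

definition exponents_dvd :: "nat \<Rightarrow> 'a::comm_ring_1 mpoly \<Rightarrow> bool" where
  "exponents_dvd p c \<longleftrightarrow> (\<forall>m\<in>Poly_Mapping.keys c. \<forall>j. p dvd Poly_Mapping.lookup m j)"

lemma exponents_dvd_sum: "(\<And>i. i \<in> S \<Longrightarrow> exponents_dvd p (f i)) \<Longrightarrow> exponents_dvd p (sum f S)"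
  unfolding exponents_dvd_def using keys_sum[of f S] by blast

lemma exponents_dvd_const_mult: "exponents_dvd p c \<Longrightarrow> exponents_dvd p (const_poly r * c)"
  using keys_const_mult[of r c] unfolding exponents_dvd_def by blast

lemma monomial_power:
  "\<exists>m'. Poly_Mapping.single m r ^ k = Poly_Mapping.single m' (r ^ k) \<and>
        (\<forall>j. Poly_Mapping.lookup m' j = k * Poly_Mapping.lookup m j)"
proof (induction k)
  case 0
  then show ?case by (intro exI[of _ 0]) simp
next
  case (Suc k)
  then obtain m' where m': "Poly_Mapping.single m r ^ k = Poly_Mapping.single m' (r ^ k)"
    "\<forall>j. Poly_Mapping.lookup m' j = k * Poly_Mapping.lookup m j" by blast
  have "Poly_Mapping.single m r ^ Suc k = Poly_Mapping.single (m + m') (r ^ Suc k)"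
    using m' by (simp add: mult_single)
  moreover have "\<forall>j. Poly_Mapping.lookup (m + m') j = Suc k * Poly_Mapping.lookup m j"
    using m' by (simp add: lookup_add)
  ultimately show ?case by blast
qed

lemma power_exponents_dvd:
  fixes f :: "'a::comm_ring_1 mpoly"
  assumes p: "prime p" and char: "of_nat p = (0::'a)"
  shows "exponents_dvd p (f ^ p)"
proof -
  have "(of_nat p :: 'a mpoly) = Poly_Mapping.single 0 (of_nat p)" by simp
  then have char_poly: "of_nat p = (0 :: 'a mpoly)" using char by simp
  have "f ^ p = (\<Sum>m\<in>Poly_Mapping.keys f. Poly_Mapping.single m (Poly_Mapping.lookup f m)) ^ p"
    by (simp add: monomial_expansion)
  also have "\<dots> = (\<Sum>m\<in>Poly_Mapping.keys f. Poly_Mapping.single m (Poly_Mapping.lookup f m) ^ p)"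
    by (rule freshmans_dream_prime_sum[OF p char_poly])
  finally have expand: "f ^ p = \<dots>" .
  have "exponents_dvd p (Poly_Mapping.single m r ^ p)" for m and r :: 'a
  proof -
    obtain m' where "Poly_Mapping.single m r ^ p = Poly_Mapping.single m' (r ^ p)"
      "\<forall>j. Poly_Mapping.lookup m' j = p * Poly_Mapping.lookup m j"
      using monomial_power by blast
    then show ?thesis unfolding exponents_dvd_def by auto
  qed
  then show ?thesis unfolding expand by (intro exponents_dvd_sum)
qed

lemma poly_ring_iff: "f \<in> poly_ring n \<longleftrightarrow> (\<forall>m\<in>Poly_Mapping.keys f. Poly_Mapping.keys m \<subseteq> {..<n})"
  by (simp add: poly_ring_def)

lemma poly_ring_keys_subset: "f \<in> poly_ring n \<Longrightarrow> Poly_Mapping.keys g \<subseteq> Poly_Mapping.keys f \<Longrightarrow> g \<in> poly_ring n"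
  unfolding poly_ring_iff by blast

lemma poly_ring_zero: "0 \<in> poly_ring n"
  unfolding poly_ring_iff by simp

lemma poly_ring_add: "f \<in> poly_ring n \<Longrightarrow> g \<in> poly_ring n \<Longrightarrow> f + g \<in> poly_ring n"
  unfolding poly_ring_iff using keys_add[of f g] by blast

lemma poly_ring_uminus: "f \<in> poly_ring n \<Longrightarrow> - f \<in> poly_ring n"
  unfolding poly_ring_iff by simp

lemma poly_ring_diff: "f \<in> poly_ring n \<Longrightarrow> g \<in> poly_ring n \<Longrightarrow> f - g \<in> poly_ring n"
  unfolding poly_ring_iff using keys_diff[of f g] by blast

lemma poly_ring_sum: "(\<And>i. i \<in> S \<Longrightarrow> f i \<in> poly_ring n) \<Longrightarrow> sum f S \<in> poly_ring n"
  by (induction S rule: infinite_finite_induct) (auto simp: poly_ring_zero poly_ring_add)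

lemma poly_ring_mult:
  assumes f: "f \<in> poly_ring n" and g: "g \<in> poly_ring n"
  shows "f * g \<in> poly_ring n"
  unfolding poly_ring_iff
proof
  fix m assume "m \<in> Poly_Mapping.keys (f * g)"
  then obtain u v where "m = u + v" "u \<in> Poly_Mapping.keys f" "v \<in> Poly_Mapping.keys g"
    using keys_mult[of f g] by blast
  then show "Poly_Mapping.keys m \<subseteq> {..<n}"
    using f g keys_add[of u v] unfolding poly_ring_iff by blast
qed

lemma poly_ring_one: "1 \<in> poly_ring n"
  unfolding poly_ring_iff by simp

lemma poly_ring_power: "f \<in> poly_ring n \<Longrightarrow> f ^ k \<in> poly_ring n"
  by (induction k) (auto simp: poly_ring_one poly_ring_mult)

lemma poly_ring_const_mult: "f \<in> poly_ring n \<Longrightarrow> const_poly r * f \<in> poly_ring n"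
  by (rule poly_ring_keys_subset[OF _ keys_const_mult])

lemma poly_ring_pdiff: "f \<in> poly_ring n \<Longrightarrow> pdiff i f \<in> poly_ring n"
  unfolding pdiff_def
  by (intro poly_ring_sum) (use keys_minus_single in \<open>fastforce simp: poly_ring_iff\<close>)

lemma mod_pred_nonzero: "(k::nat) mod p \<noteq> 0 \<Longrightarrow> (k - 1) mod p = k mod p - 1"
proof -
  assume nonzero: "k mod p \<noteq> 0"
  then have "k = Suc (k - 1)" by (cases k) auto
  then have "k mod p = (if Suc ((k - 1) mod p) = p then 0 else Suc ((k - 1) mod p))"
    by (metis mod_Suc)
  then show ?thesis using nonzero by (auto split: if_splits)
qed

section \<open>The operator \<open>\<D>\<close> over a ring of characteristic dividing \<open>p\<close>\<close>

locale char_p =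
  fixes p :: nat and a :: "nat \<Rightarrow> 'a::comm_ring_1"
  assumes p_pos: "0 < p" and char: "of_nat p = (0::'a)"
begin

lemma of_nat_mod_p: "(of_nat k :: 'a) = of_nat (k mod p)"
proof -
  have "(of_nat k :: 'a) = of_nat p * of_nat (k div p) + of_nat (k mod p)"
    by (metis div_mult_mod_eq mult.commute of_nat_add of_nat_mult)
  then show ?thesis using char by simp
qed

lemma of_nat_multiple_p: "p dvd k \<Longrightarrow> (of_nat k :: 'a) = 0"
  using of_nat_mod_p[of k] by simp

definition Dcomp :: "nat \<Rightarrow> 'a mpoly \<Rightarrow> 'a mpoly" where
  "Dcomp i h = pdiff i h - const_poly (a i) * h"

lemma additive_Dcomp: "additive (Dcomp i)"
  unfolding additive_def Dcomp_def by (simp add: additive.add[OF additive_pdiff] algebra_simps)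

lemma Dcomp_single:
  "Dcomp i (Poly_Mapping.single m r) =
    Poly_Mapping.single (m - Poly_Mapping.single i 1) (of_nat (Poly_Mapping.lookup m i) * r)
    - Poly_Mapping.single m (a i * r)"
  by (simp add: Dcomp_def pdiff_single const_mult_single)

lemma Dcomp_const_mult: "Dcomp i (const_poly r * h) = const_poly r * Dcomp i h"
proof -
  have "(Dcomp i \<circ> (\<lambda>x. const_poly r * x)) h = ((\<lambda>x. const_poly r * x) \<circ> Dcomp i) h"
    by (rule additive_eq_on_monomials[OF additive_comp[OF additive_Dcomp additive_mult_left]
          additive_comp[OF additive_mult_left additive_Dcomp]])
      (simp add: const_mult_single Dcomp_single right_diff_distrib algebra_simps)
  then show ?thesis by simp
qed

lemma poly_ring_Dcomp: "h \<in> poly_ring n \<Longrightarrow> Dcomp i h \<in> poly_ring n"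
  unfolding Dcomp_def by (intro poly_ring_diff poly_ring_pdiff poly_ring_const_mult)

lemma image_D_iff:
  "x \<in> image_D n a \<longleftrightarrow> (\<exists>h. (\<forall>i<n. h i \<in> poly_ring n) \<and> x = (\<Sum>i<n. Dcomp i (h i)))"
  unfolding image_D_def Dcomp_def by blast

lemma image_D_subset: "image_D n a \<subseteq> poly_ring n"
proof
  fix x assume "x \<in> image_D n a"
  then obtain h where "\<forall>i<n. h i \<in> poly_ring n" "x = (\<Sum>i<n. Dcomp i (h i))"
    unfolding image_D_iff by blast
  then show "x \<in> poly_ring n" by (auto intro!: poly_ring_sum poly_ring_Dcomp)
qed

lemma image_D_zero: "0 \<in> image_D n a"
  unfolding image_D_iff
  by (rule exI[of _ "\<lambda>_. 0"]) (simp add: poly_ring_zero additive.zero[OF additive_Dcomp])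

lemma image_D_add:
  assumes "x \<in> image_D n a" "y \<in> image_D n a"
  shows "x + y \<in> image_D n a"
proof -
  obtain h k where h: "\<forall>i<n. h i \<in> poly_ring n" "x = (\<Sum>i<n. Dcomp i (h i))"
    and k: "\<forall>i<n. k i \<in> poly_ring n" "y = (\<Sum>i<n. Dcomp i (k i))"
    using assms unfolding image_D_iff by blast
  have "x + y = (\<Sum>i<n. Dcomp i (h i + k i))"
    using h k by (simp add: additive.add[OF additive_Dcomp] sum.distrib)
  then show ?thesis unfolding image_D_iff using h k
    by (intro exI[of _ "\<lambda>i. h i + k i"]) (simp add: poly_ring_add)
qed

lemma image_D_uminus:
  assumes "x \<in> image_D n a"
  shows "- x \<in> image_D n a"
proof -
  obtain h where h: "\<forall>i<n. h i \<in> poly_ring n" "x = (\<Sum>i<n. Dcomp i (h i))"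
    using assms unfolding image_D_iff by blast
  have "- x = (\<Sum>i<n. Dcomp i (- h i))"
    using h by (simp add: additive.minus[OF additive_Dcomp] sum_negf)
  then show ?thesis unfolding image_D_iff using h
    by (intro exI[of _ "\<lambda>i. - h i"]) (simp add: poly_ring_uminus)
qed

lemma image_D_const_mult:
  assumes "x \<in> image_D n a"
  shows "const_poly r * x \<in> image_D n a"
proof -
  obtain h where h: "\<forall>i<n. h i \<in> poly_ring n" "x = (\<Sum>i<n. Dcomp i (h i))"
    using assms unfolding image_D_iff by blast
  have "const_poly r * x = (\<Sum>i<n. Dcomp i (const_poly r * h i))"
    using h by (simp add: sum_distrib_left Dcomp_const_mult)
  then show ?thesis unfolding image_D_iff using h
    by (intro exI[of _ "\<lambda>i. const_poly r * h i"]) (simp add: poly_ring_const_mult)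
qed

lemma image_D_single_component:
  assumes X: "X \<in> poly_ring n" and i: "i < n"
  shows "const_poly (a i) * X - pdiff i X \<in> image_D n a"
proof -
  let ?h = "\<lambda>j. if j = i then - X else 0"
  have "(\<Sum>j<n. Dcomp j (?h j)) = (\<Sum>j<n. if j = i then Dcomp j (- X) else 0)"
    by (rule sum.cong) (auto simp: additive.zero[OF additive_Dcomp])
  also have "\<dots> = Dcomp i (- X)" using i by (simp add: sum.delta)
  also have "\<dots> = const_poly (a i) * X - pdiff i X"
    unfolding Dcomp_def using additive.minus[OF additive_pdiff] by simp
  finally show ?thesis unfolding image_D_iff using X
    by (intro exI[of _ ?h]) (auto simp: poly_ring_zero poly_ring_uminus)
qed

lemma image_D_power_component:
  assumes g: "g \<in> poly_ring n" and i: "i < n"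
  shows "const_poly (a i) ^ k * g - (pdiff i ^^ k) g \<in> image_D n a"
proof (induction k)
  case 0
  then show ?case by (simp add: image_D_zero)
next
  case (Suc k)
  have derivative: "(pdiff i ^^ k) g \<in> poly_ring n"
    by (induction k) (auto simp: g poly_ring_pdiff)
  have "const_poly (a i) ^ Suc k * g - (pdiff i ^^ Suc k) g =
      const_poly (a i) * (const_poly (a i) ^ k * g - (pdiff i ^^ k) g)
      + (const_poly (a i) * (pdiff i ^^ k) g - pdiff i ((pdiff i ^^ k) g))" (is "_ = ?rhs")
    by (simp add: algebra_simps)
  moreover have "?rhs \<in> image_D n a"
    by (rule image_D_add[OF image_D_const_mult[OF Suc] image_D_single_component[OF derivative i]])
  ultimately show ?case by metis
qed

lemma pdiff_power_single:
  "(pdiff i ^^ k) (Poly_Mapping.single m (r::'a)) =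
    Poly_Mapping.single (m - Poly_Mapping.single i k) (of_nat (\<Prod>j<k. Poly_Mapping.lookup m i - j) * r)"
proof (induction k)
  case 0
  then show ?case by simp
next
  case (Suc k)
  have exponent: "m - Poly_Mapping.single i k - Poly_Mapping.single i 1 = m - Poly_Mapping.single i (Suc k)"
    by (rule poly_mapping_eqI) (simp add: lookup_minus_single)
  have "(pdiff i ^^ Suc k) (Poly_Mapping.single m r) = pdiff i ((pdiff i ^^ k) (Poly_Mapping.single m r))"
    by simp
  also have "\<dots> = Poly_Mapping.single (m - Poly_Mapping.single i (Suc k))
      (of_nat (Poly_Mapping.lookup m i - k) * (of_nat (\<Prod>j<k. Poly_Mapping.lookup m i - j) * r))"
    unfolding Suc pdiff_single exponent by (simp add: lookup_minus_single)
  also have "(of_nat (Poly_Mapping.lookup m i - k) * (of_nat (\<Prod>j<k. Poly_Mapping.lookup m i - j) * r) :: 'a)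
      = of_nat (\<Prod>j<Suc k. Poly_Mapping.lookup m i - j) * r"
    by (simp only: prod.lessThan_Suc of_nat_mult mult_ac)
  finally show ?case .
qed

text \<open>\<open>\<partial>\<^sub>i ^ p = 0\<close>: the product of \<open>p\<close> consecutive integers is divisible by \<open>p\<close>.\<close>

lemma pdiff_power_p: "(pdiff i ^^ p) (g :: 'a mpoly) = 0"
proof -
  have additive_power: "additive (pdiff i ^^ k)" for k
    by (induction k) (auto simp: additive_def additive.add[OF additive_pdiff])
  have "(pdiff i ^^ p) (Poly_Mapping.single m (r::'a)) = 0" for m r
  proof -
    let ?x = "Poly_Mapping.lookup m i"
    have "?x mod p \<in> {..<p}" using p_pos by simp
    then have "(?x - ?x mod p) dvd (\<Prod>j<p. ?x - j)" by (rule dvd_prodI[OF finite_lessThan])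
    moreover have "p dvd (?x - ?x mod p)" by (simp add: minus_mod_eq_mult_div)
    ultimately have "p dvd (\<Prod>j<p. ?x - j)" by (rule dvd_trans[rotated])
    then show ?thesis
      by (simp only: pdiff_power_single of_nat_multiple_p mult_zero_left single_zero)
  qed
  then show ?thesis using additive_expansion[OF additive_power, of p g] by simp
qed

lemma image_D_absorbs_power:
  assumes "g \<in> poly_ring n" "i < n"
  shows "const_poly (a i) ^ p * g \<in> image_D n a"
  using image_D_power_component[OF assms, of p] pdiff_power_p[of i g] by simp

subsection \<open>Truncation operators detecting the image of \<open>\<D>\<close>\<close>

text \<open>It kills \<open>Dcomp j\<close> modulo \<open>a\<^sub>j ^ p\<close>, commutes with \<open>Dcomp i\<close> for \<open>i \<noteq> j\<close>, and is
  multiplication by \<open>a\<^sub>j ^ (p - 1)\<close> on polynomials with exponents divisible by \<open>p\<close>.\<close>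

definition weight :: "nat \<Rightarrow> nat \<Rightarrow> 'a" where
  "weight j t = a j ^ (p - 1 - t) * of_nat (fact t)"

definition phi :: "nat \<Rightarrow> 'a mpoly \<Rightarrow> 'a mpoly" where
  "phi j y = (\<Sum>m\<in>Poly_Mapping.keys y.
     Poly_Mapping.single (m - Poly_Mapping.single j (Poly_Mapping.lookup m j mod p))
       (weight j (Poly_Mapping.lookup m j mod p) * Poly_Mapping.lookup y m))"

lemma additive_phi: "additive (phi j)"
  unfolding additive_def phi_def
  by (intro allI setsum_keys_plus_distrib) (auto simp: single_add distrib_left lookup_add)

lemma phi_single:
  "phi j (Poly_Mapping.single m r) =
    Poly_Mapping.single (m - Poly_Mapping.single j (Poly_Mapping.lookup m j mod p))
      (weight j (Poly_Mapping.lookup m j mod p) * r)"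
  by (simp add: phi_def)

text \<open>The weights are chosen so that lowering the exponent by one is compensated by a
  factor \<open>a\<^sub>j\<close>: \<open>(t - 1)! a\<^sub>j ^ (p - t) t = t! a\<^sub>j ^ (p - 1 - t) a\<^sub>j\<close>.\<close>

lemma weight_step:
  assumes "0 < t" "t < p"
  shows "weight j (t - 1) * of_nat t = weight j t * a j"
proof -
  have "p - 1 - (t - 1) = Suc (p - 1 - t)" using assms by simp
  then have power: "a j ^ (p - 1 - (t - 1)) = a j ^ (p - 1 - t) * a j" by (simp only: power_Suc2)
  have "(of_nat (fact t) :: 'a) = of_nat (fact (t - 1)) * of_nat t"
    using assms(1) by (simp add: fact_reduce[of t] mult.commute)
  then show ?thesis unfolding weight_def power by (simp add: algebra_simps)
qed

text \<open>On a monomial, \<open>\<phi>\<^sub>j\<close> maps the two terms of \<open>Dcomp j\<close> to the same monomial with equal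
  weights, unless \<open>p\<close> divides the exponent of \<open>z\<^sub>j\<close>, where only \<open>-a\<^sub>j ^ p r z\<^sup>m\<close> survives.\<close>

lemma phi_Dcomp_same_single:
  "phi j (Dcomp j (Poly_Mapping.single m r)) =
    (if Poly_Mapping.lookup m j mod p = 0 then - Poly_Mapping.single m (a j ^ p * r) else 0)"
proof -
  let ?mj = "Poly_Mapping.lookup m j"
  define t where "t = ?mj mod p"
  have t_less: "t < p" using p_pos unfolding t_def by simp
  have split: "phi j (Dcomp j (Poly_Mapping.single m r)) =
      phi j (Poly_Mapping.single (m - Poly_Mapping.single j 1) (of_nat ?mj * r))
      - phi j (Poly_Mapping.single m (a j * r))"
    unfolding Dcomp_single using additive.diff[OF additive_phi] by simp
  have lookup_lowered: "Poly_Mapping.lookup (m - Poly_Mapping.single j 1) j = ?mj - 1"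
    by (simp add: lookup_minus_single)
  show ?thesis
  proof (cases "t = 0")
    case True
    have "(of_nat ?mj :: 'a) = 0" using True of_nat_mod_p[of ?mj] unfolding t_def by simp
    then have vanish: "phi j (Poly_Mapping.single (m - Poly_Mapping.single j 1) (of_nat ?mj * r)) = 0"
      by (simp add: phi_single additive.zero[OF additive_phi])
    have "p = Suc (p - 1)" using p_pos by simp
    then have "a j ^ (p - 1) * a j = a j ^ p" by (metis power_Suc2)
    then have "phi j (Poly_Mapping.single m (a j * r)) = Poly_Mapping.single m (a j ^ p * r)"
      using True unfolding t_def by (simp add: phi_single weight_def mult.assoc[symmetric])
    then show ?thesis using split vanish True unfolding t_def by simp
  next
    case False
    have t_lowered: "(?mj - 1) mod p = t - 1" using mod_pred_nonzero False unfolding t_def by blast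
    have exponent: "(m - Poly_Mapping.single j 1) - Poly_Mapping.single j (t - 1) = m - Poly_Mapping.single j t"
      by (rule poly_mapping_eqI) (use False in \<open>auto simp: lookup_minus_single\<close>)
    have "(of_nat ?mj :: 'a) = of_nat t" using of_nat_mod_p[of ?mj] unfolding t_def by simp
    then have "weight j (t - 1) * (of_nat ?mj * r) = weight j t * (a j * r)"
      using weight_step[of t j] False t_less by (simp add: mult.assoc[symmetric])
    then have "phi j (Poly_Mapping.single (m - Poly_Mapping.single j 1) (of_nat ?mj * r))
        = phi j (Poly_Mapping.single m (a j * r))"
      unfolding phi_single lookup_lowered t_lowered[unfolded t_def] exponent[unfolded t_def]
      unfolding t_def by simp
    then show ?thesis using split False unfolding t_def by simp
  qed
qed

lemma phi_Dcomp_commute_single: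
  assumes ij: "i \<noteq> j"
  shows "phi j (Dcomp i (Poly_Mapping.single m r)) = Dcomp i (phi j (Poly_Mapping.single m r))"
proof -
  let ?t = "Poly_Mapping.lookup m j mod p"
  have lookup_j: "Poly_Mapping.lookup (m - Poly_Mapping.single i 1) j = Poly_Mapping.lookup m j"
    using ij by (simp add: lookup_minus_single)
  have lookup_i: "Poly_Mapping.lookup (m - Poly_Mapping.single j ?t) i = Poly_Mapping.lookup m i"
    using ij by (simp add: lookup_minus_single)
  have exponent: "(m - Poly_Mapping.single i 1) - Poly_Mapping.single j ?t
      = (m - Poly_Mapping.single j ?t) - Poly_Mapping.single i 1"
    by (rule poly_mapping_eqI) (simp add: lookup_minus_single)
  have "phi j (Dcomp i (Poly_Mapping.single m r)) =
      phi j (Poly_Mapping.single (m - Poly_Mapping.single i 1) (of_nat (Poly_Mapping.lookup m i) * r))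
      - phi j (Poly_Mapping.single m (a i * r))"
    unfolding Dcomp_single using additive.diff[OF additive_phi] by simp
  also have "\<dots> = Poly_Mapping.single ((m - Poly_Mapping.single j ?t) - Poly_Mapping.single i 1)
        (weight j ?t * (of_nat (Poly_Mapping.lookup m i) * r))
      - Poly_Mapping.single (m - Poly_Mapping.single j ?t) (weight j ?t * (a i * r))"
    unfolding phi_single lookup_j exponent ..
  also have "\<dots> = Dcomp i (phi j (Poly_Mapping.single m r))"
    unfolding phi_single Dcomp_single lookup_i by (simp add: algebra_simps)
  finally show ?thesis .
qed

lemma phi_Dcomp_commute:
  assumes "i \<noteq> j"
  shows "phi j (Dcomp i h) = Dcomp i (phi j h)"
proof -
  have "(phi j \<circ> Dcomp i) h = (Dcomp i \<circ> phi j) h"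
    by (rule additive_eq_on_monomials[OF additive_comp[OF additive_phi additive_Dcomp]
          additive_comp[OF additive_Dcomp additive_phi]])
      (simp add: phi_Dcomp_commute_single[OF assms])
  then show ?thesis by simp
qed

lemma coeffs_in_phi_Dcomp_same:
  assumes L: "is_ideal L" and aL: "\<And>x. a j ^ p * x \<in> L"
  shows "coeffs_in L (phi j (Dcomp j h))"
proof -
  have monomial: "coeffs_in L ((phi j \<circ> Dcomp j) (Poly_Mapping.single m r))" for m r
    using phi_Dcomp_same_single[of j m r]
      coeffs_in_uminus[OF L coeffs_in_single[OF L aL]] ideal_zero[OF L]
    by (auto simp: coeffs_in_def)
  show ?thesis
    using additive_expansion[OF additive_comp[OF additive_phi additive_Dcomp], of j j h]
    by (auto intro: coeffs_in_sum[OF L] monomial[unfolded comp_def])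
qed

lemma coeffs_in_phi:
  assumes L: "is_ideal L" and y: "coeffs_in L y"
  shows "coeffs_in L (phi j y)"
proof -
  have "coeffs_in L (phi j (Poly_Mapping.single m (Poly_Mapping.lookup y m)))" for m
    using y unfolding phi_single coeffs_in_def
    by (intro coeffs_in_single[OF L, unfolded coeffs_in_def] ideal_mult_left[OF L]) simp
  then show ?thesis using additive_expansion[OF additive_phi, of j y]
    by (auto intro: coeffs_in_sum[OF L])
qed

lemma phi_exponents_dvd:
  assumes c: "exponents_dvd p c"
  shows "phi j c = const_poly (a j ^ (p - 1)) * c"
proof -
  have "(phi j \<circ> (\<lambda>x. x)) c
      = (\<Sum>m\<in>Poly_Mapping.keys c. const_poly (a j ^ (p - 1)) * Poly_Mapping.single m (Poly_Mapping.lookup c m))"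
    unfolding additive_expansion[OF additive_phi, of j c] comp_def
  proof (rule sum.cong)
    fix m assume "m \<in> Poly_Mapping.keys c"
    then have "Poly_Mapping.lookup m j mod p = 0" using c unfolding exponents_dvd_def by auto
    then show "phi j (Poly_Mapping.single m (Poly_Mapping.lookup c m))
        = const_poly (a j ^ (p - 1)) * Poly_Mapping.single m (Poly_Mapping.lookup c m)"
      by (simp add: phi_single const_mult_single weight_def)
  qed simp
  also have "\<dots> = const_poly (a j ^ (p - 1)) * c"
    using additive_expansion[OF additive_mult_left, of "const_poly (a j ^ (p - 1))" c] by simp
  finally show ?thesis by simp
qed

fun Phi :: "nat \<Rightarrow> 'a mpoly \<Rightarrow> 'a mpoly" where
  "Phi 0 y = y"
| "Phi (Suc k) y = Phi k (phi k y)"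

lemma additive_Phi: "additive (Phi k)"
proof (induction k)
  case 0
  then show ?case by (simp add: additive_def)
next
  case (Suc k)
  have "Phi (Suc k) = Phi k \<circ> phi k" by (rule ext) simp
  then show ?case using additive_comp[OF Suc additive_phi, of k] by (simp only:)
qed

lemma coeffs_in_Phi: "is_ideal L \<Longrightarrow> coeffs_in L y \<Longrightarrow> coeffs_in L (Phi k y)"
  by (induction k arbitrary: y) (auto simp: coeffs_in_phi)

lemma Phi_exponents_dvd: "exponents_dvd p c \<Longrightarrow> Phi k c = const_poly (\<Prod>i<k. a i ^ (p - 1)) * c"
proof (induction k arbitrary: c)
  case 0
  then show ?case by (simp add: const_poly_def)
next
  case (Suc k)
  have "Phi (Suc k) c = Phi k (const_poly (a k ^ (p - 1)) * c)" using phi_exponents_dvd[OF Suc.prems] by simp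
  also have "\<dots> = const_poly (\<Prod>i<k. a i ^ (p - 1)) * (const_poly (a k ^ (p - 1)) * c)"
    using Suc.IH exponents_dvd_const_mult[OF Suc.prems] by blast
  also have "\<dots> = const_poly (\<Prod>i<Suc k. a i ^ (p - 1)) * c"
    by (simp add: mult.assoc[symmetric] const_mult_const)
  finally show ?case .
qed

text \<open>\<open>\<Phi>\<^sub>k\<close> maps \<open>Dcomp i h\<close>, \<open>i < k\<close>, to a polynomial with coefficients in
  \<open>(a\<^sub>0 ^ p, \<dots>, a\<^sub>k\<^sub>-\<^sub>1 ^ p)\<close>: the factor \<open>\<phi>\<^sub>i\<close> does so, and the later factors commute
  with \<open>Dcomp i\<close> and preserve coefficient ideals.\<close>

lemma coeffs_in_Phi_Dcomp:
  "i < k \<Longrightarrow> coeffs_in (adjoin_seq {0} (\<lambda>i. a i ^ p) k) (Phi k (Dcomp i h))"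
proof (induction k arbitrary: h)
  case 0
  then show ?case by simp
next
  case (Suc k)
  let ?J = "adjoin_seq {0} (\<lambda>i. a i ^ p) (Suc k)"
  have J: "is_ideal ?J" using adjoin_seq_ideal is_ideal_zero by blast
  show ?case
  proof (cases "i < k")
    case True
    then have "coeffs_in (adjoin_seq {0} (\<lambda>i. a i ^ p) k) (Phi k (Dcomp i (phi k h)))"
      using Suc.IH by blast
    then show ?thesis using True phi_Dcomp_commute[of i k h]
      by (simp add: coeffs_in_mono[OF adjoin_seq_mono[OF le_SucI[OF order_refl]]])
  next
    case False
    then have ik: "i = k" using Suc.prems by simp
    have "a k ^ p * x \<in> ?J" for x
      using adjoin_seq_generator[OF is_ideal_zero, of k "Suc k" x "\<lambda>i. a i ^ p"]
      by (simp add: mult.commute)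
    then have "coeffs_in ?J (phi k (Dcomp k h))" using coeffs_in_phi_Dcomp_same[OF J] by blast
    then show ?thesis using ik coeffs_in_Phi[OF J] by simp
  qed
qed

lemma image_D_coeff_times_prod:
  assumes c: "exponents_dvd p c" and "c \<in> image_D n a"
  shows "(\<Prod>i<n. a i ^ (p - 1)) * Poly_Mapping.lookup c m \<in> adjoin_seq {0} (\<lambda>i. a i ^ p) n"
proof -
  let ?J = "adjoin_seq {0} (\<lambda>i. a i ^ p) n"
  have J: "is_ideal ?J" using adjoin_seq_ideal is_ideal_zero by blast
  obtain h where c_eq: "c = (\<Sum>i<n. Dcomp i (h i))" using assms(2) unfolding image_D_iff by blast
  have "Phi n c = (\<Sum>i<n. Phi n (Dcomp i (h i)))" using c_eq additive.sum[OF additive_Phi] by simp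
  moreover have "coeffs_in ?J (\<Sum>i<n. Phi n (Dcomp i (h i)))"
    by (intro coeffs_in_sum[OF J] coeffs_in_Phi_Dcomp) simp
  ultimately have "coeffs_in ?J (Phi n c)" by simp
  then show ?thesis using Phi_exponents_dvd[OF c, of n] by (simp add: coeffs_in_def lookup_const_mult)
qed

lemma gen_ideal_eq_adjoin_seq: "gen_ideal a k = adjoin_seq {0} a k"
  unfolding gen_ideal_def adjoin_seq_def by (auto simp: mult.commute)

lemma image_D_coeffs_in_gen_ideal:
  assumes c: "exponents_dvd p c" "c \<in> image_D n a" and reg: "regular_sequence n a"
  shows "coeffs_in (gen_ideal a n) c"
  unfolding coeffs_in_def
proof
  fix m
  have "regular_mod {0} a n"
    using reg unfolding regular_sequence_def regular_mod_def nzd_mod_def gen_ideal_eq_adjoin_seq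
    by (auto simp: mult.commute)
  then have "Poly_Mapping.lookup c m \<in> adjoin_seq {0} a n"
    using regular_cancel_powers[OF is_ideal_zero _ _ image_D_coeff_times_prod[OF c]] p_pos by simp
  then show "Poly_Mapping.lookup c m \<in> gen_ideal a n" by (simp add: gen_ideal_eq_adjoin_seq)
qed

end

lemma gen_ideal_coeffs_decomposition:
  assumes coeffs: "coeffs_in (gen_ideal a n) c" and c: "c \<in> poly_ring n"
  shows "\<exists>cc. (\<forall>j<n. cc j \<in> poly_ring n) \<and> c = (\<Sum>j<n. const_poly (a j) * cc j)"
proof -
  have "\<forall>m. \<exists>r. Poly_Mapping.lookup c m = (\<Sum>j<n. r j * a j)"
    using coeffs unfolding coeffs_in_def gen_ideal_def by blast
  then obtain r where r: "\<And>m. Poly_Mapping.lookup c m = (\<Sum>j<n. r m j * a j)" by metis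
  define cc where "cc j = (\<Sum>m\<in>Poly_Mapping.keys c. Poly_Mapping.single m (r m j))" for j
  have lookup_cc: "Poly_Mapping.lookup (cc j) k = (if k \<in> Poly_Mapping.keys c then r k j else 0)" for j k
    unfolding cc_def lookup_sum lookup_single by (simp add: when_def)
  have "c = (\<Sum>j<n. const_poly (a j) * cc j)"
  proof (rule poly_mapping_eqI)
    fix k
    have "Poly_Mapping.lookup (\<Sum>j<n. const_poly (a j) * cc j) k = (\<Sum>j<n. a j * Poly_Mapping.lookup (cc j) k)"
      by (simp add: lookup_sum lookup_const_mult)
    also have "\<dots> = Poly_Mapping.lookup c k"
      by (cases "k \<in> Poly_Mapping.keys c") (simp_all add: lookup_cc r mult.commute in_keys_iff)
    finally show "Poly_Mapping.lookup c k = Poly_Mapping.lookup (\<Sum>j<n. const_poly (a j) * cc j) k" by simp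
  qed
  moreover have "\<forall>j<n. cc j \<in> poly_ring n"
    using c unfolding cc_def poly_ring_iff
    by (auto intro!: poly_ring_sum[unfolded poly_ring_iff] split: if_splits)
  ultimately show ?thesis by blast
qed

context char_p
begin

text \<open>Such a polynomial is absorbed by \<open>Im \<D>\<close>: each summand \<open>a\<^sub>j c\<^sub>j\<close> is absorbed after
  \<open>p\<close> steps, hence the sum after \<open>n (p - 1) + 1\<close> steps.\<close>

lemma image_D_absorbs_gen_ideal_coeffs:
  assumes coeffs: "coeffs_in (gen_ideal a n) c" and c: "c \<in> poly_ring n"
  shows "absorbed (poly_ring n) (image_D n a) (n * (p - 1) + 1) c"
proof -
  obtain cc where cc: "\<forall>j<n. cc j \<in> poly_ring n" and c_eq: "c = (\<Sum>j<n. const_poly (a j) * cc j)"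
    using gen_ideal_coeffs_decomposition[OF coeffs c] by blast
  have summand: "const_poly (a j) * cc j \<in> poly_ring n \<and>
      absorbed (poly_ring n) (image_D n a) p (const_poly (a j) * cc j)" if j: "j < n" for j
    unfolding absorbed_def
  proof (intro conjI ballI)
    show "const_poly (a j) * cc j \<in> poly_ring n" using cc j by (simp add: poly_ring_const_mult)
    fix g :: "'a mpoly" assume g: "g \<in> poly_ring n"
    have "(const_poly (a j) * cc j) ^ p * g = const_poly (a j) ^ p * (cc j ^ p * g)"
      by (simp add: power_mult_distrib algebra_simps)
    moreover have "cc j ^ p * g \<in> poly_ring n" using cc j g by (simp add: poly_ring_mult poly_ring_power)
    ultimately show "(const_poly (a j) * cc j) ^ p * g \<in> image_D n a"
      using image_D_absorbs_power j by simp
  qed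
  show ?thesis unfolding c_eq
    by (rule absorbed_sum[OF _ _ poly_ring_zero poly_ring_one image_D_zero _ _ summand])
      (use p_pos in \<open>auto simp: poly_ring_mult poly_ring_add image_D_add\<close>)
qed

end

theorem theorem2p2:
  fixes p n :: nat and a :: "nat \<Rightarrow> 'a::comm_ring_1"
  assumes "prime p"
    and "of_nat p = (0::'a)"
    and "regular_sequence n a"
  shows "mathieu_subspace (poly_ring n) (image_D n a)"
proof -
  interpret char_p p a using assms by unfold_locales (auto simp: prime_gt_0_nat)
  have ring_mult: "\<forall>x\<in>poly_ring n. \<forall>y\<in>poly_ring n. x * y \<in> poly_ring n"
    by (simp add: poly_ring_mult)
  have absorption: "\<exists>N. \<forall>m\<ge>N. f ^ m * g \<in> image_D n a"
    if f: "f \<in> poly_ring n" and powers: "\<forall>m\<ge>1. f ^ m \<in> image_D n a" and g: "g \<in> poly_ring n" for f g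
  proof -
    have "coeffs_in (gen_ideal a n) (f ^ p)"
      using image_D_coeffs_in_gen_ideal[OF power_exponents_dvd[OF assms(1,2)] _ assms(3)]
        powers p_pos by simp
    then have "absorbed (poly_ring n) (image_D n a) (n * (p - 1) + 1) (f ^ p)"
      using image_D_absorbs_gen_ideal_coeffs poly_ring_power[OF f] by blast
    then show ?thesis using absorbed_power_eventually[OF ring_mult poly_ring_one f g] by blast
  qed
  show ?thesis
    unfolding mathieu_subspace_def
    using image_D_subset image_D_zero image_D_add image_D_uminus absorption by blast
qed

end
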